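(* Let $T>0$, let $r_\alpha,r_\beta,r_v,t_v,\sigma_B,\sigma_W>0$, $\overline{v}_T\in\mathbb{R}$, $\overline{v},f_c,f_d\in C([0,T];\mathbb{R})$, and let $0\le\lambda\le r_\beta\sigma_W^2$. Consider the ODE system on $[0,T]$ $$\begin{cases} \dot\mu_t=\frac{1}{r_\alpha}\mu_t^2+\frac{1}{r_\beta}\eta_t^2-2\eta_t-r_v,\\ \dot\eta_t=\frac{1}{r_\alpha}\mu_t\eta_t+\frac{1}{r_\beta}\rho_t\eta_t-\rho_t-\frac{\lambda}{r_\beta\sigma_W^2}\eta_tf_c(t),\\ \dot\rho_t=\frac{1}{r_\alpha}\eta_t^2+\frac{1}{r_\beta}\rho_t^2-\frac{2\lambda}{r_\beta\sigma_W^2}\rho_tf_c(t)+\big(\frac{\lambda^2}{r_\beta\sigma_W^4}-\frac{\lambda}{\sigma_W^2}\big)f_c^2(t),\\ \dot\gamma_t=\frac{1}{r_\alpha}\mu_t\gamma_t+\frac{1}{r_\beta}\eta_t\theta_t-\theta_t+r_v\overline{v}(t)-\frac{\lambda}{r_\beta\sigma_W^2}\eta_tf_d(t),\\ \dot\theta_t=\frac{1}{r_\alpha}\eta_t\gamma_t+\frac{1}{r_\beta}\rho_t\theta_t-\frac{\lambda}{r_\beta\sigma_W^2}\theta_tf_c(t)-\frac{\lambda}{r_\beta\sigma_W^2}f_d(t)\rho_t+\big(\frac{\lambda^2}{r_\beta\sigma_W^4}-\frac{\lambda}{\sigma_W^2}\big)f_c(t)f_d(t),\\ \dot\xi_t=\frac{1}{2r_\alpha}\gamma_t^2+\frac{1}{2r_\beta}\theta_t^2-\frac12\sigma_B^2\mu_t-\frac12\sigma_W^2\rho_t-\frac{\lambda}{r_\beta\sigma_W^2}f_d(t)\theta_t-\frac{r_v\overline{v}(t)^2}{2}+\big(\frac{\lambda^2}{2r_\beta\sigma_W^4}-\frac{\lambda}{2\sigma_W^2}\big)f_d^2(t),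 \end{cases}$$ with terminal conditions $\mu_T=t_v$, $\eta_T=0$, $\rho_T=0$, $\gamma_T=-t_v\overline{v}_T$, $\theta_T=0$, $\xi_T=\frac{t_v}{2}\overline{v}_T^2$. Suppose $f_c\equiv f_d\equiv0$ or $\lambda=0$. Then the unique solution $(\mu,\eta,\rho,\gamma,\theta,\xi)$ of this system on $[0,T]$ satisfies $\eta\equiv\rho\equiv\theta\equiv0$, and consequently the feedback function $$\hat\beta(t,v,y)=-\frac{\eta_t}{r_\beta}v+\Big(\frac{\lambda}{r_\beta\sigma_W^2}f_c(t)-\frac{\rho_t}{r_\beta}\Big)y+\Big(\frac{\lambda}{r_\beta\sigma_W^2}f_d(t)-\frac{\theta_t}{r_\beta}\Big)$$ satisfies $\hat\beta\equiv0$ on $[0,T]\times\mathbb{R}\times\mathbb{R}$.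
   Context: It is a known fact (which may be assumed) that under the condition $0\le\lambda\le r_\beta\sigma_W^2$ this terminal-value ODE system has a unique global solution on $[0,T]$ for every $T>0$. The system arises from a quadratic ansatz $\mathcal{V}(t,v,y)=\frac{\mu_t}{2}v^2+\eta_tvy+\frac{\rho_t}{2}y^2+\gamma_tv+\theta_ty+\xi_t$ for the value function of a linear-quadratic control problem, and $\hat\beta$ is the resulting optimal feedback for the control $\beta$. *)

theory Defs
  imports "HOL-Analysis.Analysis"
begin

text \<open>The ODE system on [0,T] with terminal conditions. Derivatives are taken
  within the closed interval [0,T] (one-sided at the endpoints).\<close>
definition is_riccati_solution ::
  "real \<Rightarrow> real \<Rightarrow> real \<Rightarrow> real \<Rightarrow> real \<Rightarrow> real \<Rightarrow> real \<Rightarrow> real \<Rightarrow> real \<Rightarrow>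
   (real \<Rightarrow> real) \<Rightarrow> (real \<Rightarrow> real) \<Rightarrow> (real \<Rightarrow> real) \<Rightarrow>
   (real \<Rightarrow> real) \<Rightarrow> (real \<Rightarrow> real) \<Rightarrow> (real \<Rightarrow> real) \<Rightarrow> (real \<Rightarrow> real) \<Rightarrow> (real \<Rightarrow> real) \<Rightarrow> (real \<Rightarrow> real) \<Rightarrow> bool"
where
  "is_riccati_solution T r\<^sub>\<alpha> r\<^sub>\<beta> r\<^sub>v t\<^sub>v \<sigma>\<^sub>B \<sigma>\<^sub>W lam vT vbar fc fd mu eta rho gam theta xi \<longleftrightarrow>
     (\<forall>t\<in>{0..T}.
        (mu has_real_derivative
            (1/r\<^sub>\<alpha> * (mu t)\<^sup>2 + 1/r\<^sub>\<beta> * (eta t)\<^sup>2 - 2 * eta t - r\<^sub>v)) (at t within {0..T}) \<and>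
        (eta has_real_derivative
            (1/r\<^sub>\<alpha> * mu t * eta t + 1/r\<^sub>\<beta> * rho t * eta t - rho t
             - lam / (r\<^sub>\<beta> * \<sigma>\<^sub>W\<^sup>2) * eta t * fc t)) (at t within {0..T}) \<and>
        (rho has_real_derivative
            (1/r\<^sub>\<alpha> * (eta t)\<^sup>2 + 1/r\<^sub>\<beta> * (rho t)\<^sup>2
             - 2 * lam / (r\<^sub>\<beta> * \<sigma>\<^sub>W\<^sup>2) * rho t * fc t
             + (lam\<^sup>2 / (r\<^sub>\<beta> * \<sigma>\<^sub>W ^ 4) - lam / \<sigma>\<^sub>W\<^sup>2) * (fc t)\<^sup>2)) (at t within {0..T}) \<and>
        (gam has_real_derivative
            (1/r\<^sub>\<alpha> * mu t * gam t + 1/r\<^sub>\<beta> * eta t * theta t - theta t + r\<^sub>v * vbar t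
             - lam / (r\<^sub>\<beta> * \<sigma>\<^sub>W\<^sup>2) * eta t * fd t)) (at t within {0..T}) \<and>
        (theta has_real_derivative
            (1/r\<^sub>\<alpha> * eta t * gam t + 1/r\<^sub>\<beta> * rho t * theta t
             - lam / (r\<^sub>\<beta> * \<sigma>\<^sub>W\<^sup>2) * theta t * fc t
             - lam / (r\<^sub>\<beta> * \<sigma>\<^sub>W\<^sup>2) * fd t * rho t
             + (lam\<^sup>2 / (r\<^sub>\<beta> * \<sigma>\<^sub>W ^ 4) - lam / \<sigma>\<^sub>W\<^sup>2) * fc t * fd t)) (at t within {0..T}) \<and>
        (xi has_real_derivative
            (1/(2*r\<^sub>\<alpha>) * (gam t)\<^sup>2 + 1/(2*r\<^sub>\<beta>) * (theta t)\<^sup>2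
             - 1/2 * \<sigma>\<^sub>B\<^sup>2 * mu t - 1/2 * \<sigma>\<^sub>W\<^sup>2 * rho t
             - lam / (r\<^sub>\<beta> * \<sigma>\<^sub>W\<^sup>2) * fd t * theta t
             - r\<^sub>v * (vbar t)\<^sup>2 / 2
             + (lam\<^sup>2 / (2 * r\<^sub>\<beta> * \<sigma>\<^sub>W ^ 4) - lam / (2 * \<sigma>\<^sub>W\<^sup>2)) * (fd t)\<^sup>2)) (at t within {0..T}))
     \<and> mu T = t\<^sub>v \<and> eta T = 0 \<and> rho T = 0 \<and> gam T = - t\<^sub>v * vT \<and> theta T = 0
     \<and> xi T = t\<^sub>v / 2 * vT\<^sup>2"

definition beta_hat ::
  "real \<Rightarrow> real \<Rightarrow> real \<Rightarrow> (real \<Rightarrow> real) \<Rightarrow> (real \<Rightarrow> real) \<Rightarrow>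
   (real \<Rightarrow> real) \<Rightarrow> (real \<Rightarrow> real) \<Rightarrow> (real \<Rightarrow> real) \<Rightarrow> real \<Rightarrow> real \<Rightarrow> real \<Rightarrow> real"
where
  "beta_hat r\<^sub>\<beta> \<sigma>\<^sub>W lam fc fd eta rho theta t v y =
     - eta t / r\<^sub>\<beta> * v + (lam / (r\<^sub>\<beta> * \<sigma>\<^sub>W\<^sup>2) * fc t - rho t / r\<^sub>\<beta>) * y
     + (lam / (r\<^sub>\<beta> * \<sigma>\<^sub>W\<^sup>2) * fd t - theta t / r\<^sub>\<beta>)"

end

(* If lam fc = lam fd = 0, the equations for (eta, rho, theta) lose their inhomogeneous terms and
   form a linear homogeneous system whose coefficients (built from mu, eta, rho, gam) are bounded
   on the compact interval [0, T]. The energy E = eta^2 + rho^2 + theta^2 then satisfies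
   E' >= -L E, so exp (L t) E t is nondecreasing; since E >= 0 and E T = 0, E vanishes on [0, T]. *)

theory Submission
  imports Defs
begin

lemma gronwall_vanishing_backward:
  fixes E E' :: "real \<Rightarrow> real" and a b L s :: real
  assumes deriv: "\<And>t. t \<in> {a..b} \<Longrightarrow> (E has_real_derivative E' t) (at t within {a..b})"
    and growth: "\<And>t. t \<in> {a..b} \<Longrightarrow> E' t \<ge> - L * E t"
    and nonneg: "\<And>t. t \<in> {a..b} \<Longrightarrow> E t \<ge> 0"
    and end_zero: "E b = 0"
    and s: "s \<in> {a..b}"
  shows "E s = 0"
proof -
  define F where "F t = exp (L * t) * E t" for t
  have F_deriv: "(F has_real_derivative exp (L * t) * (L * E t + E' t)) (at t within {a..b})"
    if "t \<in> {a..b}" for t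
    unfolding F_def by (rule derivative_eq_intros deriv that refl)+ (simp add: algebra_simps)
  have "F s \<le> F b"
  proof (rule DERIV_nonneg_imp_increasing_open[of s b F])
    show "s \<le> b" using s by simp
    show "continuous_on {s..b} F"
      using continuous_on_subset[OF DERIV_continuous_on[OF F_deriv]] s by auto
    fix t assume "s < t" "t < b"
    then have t: "t \<in> {a..b}" "t \<in> interior {a..b}" using s by auto
    show "\<exists>y. (F has_real_derivative y) (at t) \<and> y \<ge> 0"
      using F_deriv[OF t(1)] growth[OF t(1)] by (auto simp: at_within_interior[OF t(2)])
  qed
  then have "E s \<le> 0" by (simp add: F_def end_zero mult_le_0_iff)
  with nonneg[OF s] show ?thesis by simp
qed

lemma linearly_bounded_derivative_vanishing_backward:
  fixes x x' :: "real \<Rightarrow> 'a::real_inner" and a b C s :: real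
  assumes deriv: "\<And>t. t \<in> {a..b} \<Longrightarrow> (x has_vector_derivative x' t) (at t within {a..b})"
    and bound: "\<And>t. t \<in> {a..b} \<Longrightarrow> norm (x' t) \<le> C * norm (x t)"
    and end_zero: "x b = 0"
    and s: "s \<in> {a..b}"
  shows "x s = 0"
proof -
  have "inner (x s) (x s) = 0"
  proof (rule gronwall_vanishing_backward[where L = "2 * C", OF _ _ _ _ s])
    fix t assume t: "t \<in> {a..b}"
    show "((\<lambda>t. inner (x t) (x t)) has_real_derivative 2 * inner (x t) (x' t)) (at t within {a..b})"
      using deriv[OF t]
      by (auto intro!: derivative_eq_intros
          simp: has_field_derivative_def has_vector_derivative_def algebra_simps inner_commute)
    have "\<bar>inner (x t) (x' t)\<bar> \<le> norm (x t) * norm (x' t)" by (rule Cauchy_Schwarz_ineq2)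
    also have "\<dots> \<le> norm (x t) * (C * norm (x t))" using bound[OF t] by (simp add: mult_left_mono)
    finally show "2 * inner (x t) (x' t) \<ge> - (2 * C) * inner (x t) (x t)"
      by (simp add: power2_norm_eq_inner[symmetric] power2_eq_square algebra_simps)
  qed (use end_zero in auto)
  then show ?thesis by simp
qed

lemma riccati_solution_continuous:
  assumes "is_riccati_solution T r\<^sub>\<alpha> r\<^sub>\<beta> r\<^sub>v t\<^sub>v \<sigma>\<^sub>B \<sigma>\<^sub>W lam vT vbar fc fd mu eta rho gam theta xi"
  shows "continuous_on {0..T} mu" "continuous_on {0..T} eta" "continuous_on {0..T} rho"
    and "continuous_on {0..T} gam"
proof -
  note sol = assms[unfolded is_riccati_solution_def, THEN conjunct1, rule_format]
  show "continuous_on {0..T} mu"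
    by (rule DERIV_continuous_on[OF sol[THEN conjunct1]])
  show "continuous_on {0..T} eta"
    by (rule DERIV_continuous_on[OF sol[THEN conjunct2, THEN conjunct1]])
  show "continuous_on {0..T} rho"
    by (rule DERIV_continuous_on[OF sol[THEN conjunct2, THEN conjunct2, THEN conjunct1]])
  show "continuous_on {0..T} gam"
    by (rule DERIV_continuous_on[OF sol[THEN conjunct2, THEN conjunct2, THEN conjunct2, THEN conjunct1]])
qed

lemma riccati_solution_decoupled_derivatives:
  assumes "is_riccati_solution T r\<^sub>\<alpha> r\<^sub>\<beta> r\<^sub>v t\<^sub>v \<sigma>\<^sub>B \<sigma>\<^sub>W lam vT vbar fc fd mu eta rho gam theta xi"
    and "t \<in> {0..T}" and "lam = 0 \<or> fc t = 0 \<and> fd t = 0"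
  shows "(eta has_real_derivative (mu t / r\<^sub>\<alpha> + rho t / r\<^sub>\<beta>) * eta t - rho t) (at t within {0..T})"
    and "(rho has_real_derivative eta t / r\<^sub>\<alpha> * eta t + rho t / r\<^sub>\<beta> * rho t) (at t within {0..T})"
    and "(theta has_real_derivative gam t / r\<^sub>\<alpha> * eta t + rho t / r\<^sub>\<beta> * theta t) (at t within {0..T})"
proof -
  note sol = assms(1)[unfolded is_riccati_solution_def, THEN conjunct1, rule_format, OF assms(2)]
  show "(eta has_real_derivative (mu t / r\<^sub>\<alpha> + rho t / r\<^sub>\<beta>) * eta t - rho t) (at t within {0..T})"
    using sol[THEN conjunct2, THEN conjunct1] by (rule DERIV_cong) (use assms(3) in \<open>auto simp: algebra_simps\<close>)
  show "(rho has_real_derivative eta t / r\<^sub>\<alpha> * eta t + rho t / r\<^sub>\<beta> * rho t) (at t within {0..T})"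
    using sol[THEN conjunct2, THEN conjunct2, THEN conjunct1] by (rule DERIV_cong) (use assms(3) in \<open>auto simp: power2_eq_square\<close>)
  show "(theta has_real_derivative gam t / r\<^sub>\<alpha> * eta t + rho t / r\<^sub>\<beta> * theta t) (at t within {0..T})"
    using sol[THEN conjunct2, THEN conjunct2, THEN conjunct2, THEN conjunct2, THEN conjunct1]
    by (rule DERIV_cong) (use assms(3) in auto)
qed

lemma riccati_solution_bounded:
  assumes "is_riccati_solution T r\<^sub>\<alpha> r\<^sub>\<beta> r\<^sub>v t\<^sub>v \<sigma>\<^sub>B \<sigma>\<^sub>W lam vT vbar fc fd mu eta rho gam theta xi"
  obtains M where "\<And>t. t \<in> {0..T} \<Longrightarrow> \<bar>mu t\<bar> \<le> M \<and> \<bar>eta t\<bar> \<le> M \<and> \<bar>rho t\<bar> \<le> M \<and> \<bar>gam t\<bar> \<le> M"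
proof -
  have "continuous_on {0..T} (\<lambda>t. \<bar>mu t\<bar> + \<bar>eta t\<bar> + \<bar>rho t\<bar> + \<bar>gam t\<bar>)"
    using riccati_solution_continuous[OF assms] by (intro continuous_intros)
  then obtain M where M: "\<And>t. t \<in> {0..T} \<Longrightarrow> norm (\<bar>mu t\<bar> + \<bar>eta t\<bar> + \<bar>rho t\<bar> + \<bar>gam t\<bar>) \<le> M"
    using continuous_on_compact_bound[OF compact_Icc] by blast
  show ?thesis
  proof (rule that)
    fix t assume "t \<in> {0..T}"
    then have "\<bar>mu t\<bar> + \<bar>eta t\<bar> + \<bar>rho t\<bar> + \<bar>gam t\<bar> \<le> M" using M by simp
    then show "\<bar>mu t\<bar> \<le> M \<and> \<bar>eta t\<bar> \<le> M \<and> \<bar>rho t\<bar> \<le> M \<and> \<bar>gam t\<bar> \<le> M" by linarith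
  qed
qed

lemma abs_linear_form_le:
  fixes p q u w K N :: real
  assumes "\<bar>p\<bar> \<le> K" "\<bar>q\<bar> \<le> K" "\<bar>u\<bar> \<le> N" "\<bar>w\<bar> \<le> N"
  shows "\<bar>p * u + q * w\<bar> \<le> 2 * K * N"
proof -
  have "\<bar>p * u\<bar> \<le> K * N" "\<bar>q * w\<bar> \<le> K * N"
    unfolding abs_mult using assms by (auto intro!: mult_mono)
  then show ?thesis using abs_triangle_ineq[of "p * u" "q * w"] by linarith
qed

lemma norm_triple_le:
  fixes u v w :: real
  shows "norm (u, v, w) \<le> \<bar>u\<bar> + \<bar>v\<bar> + \<bar>w\<bar>"
  using norm_Pair_le[of u "(v, w)"] norm_Pair_le[of v w] by simp

(* m, e, r, g stand for the values of mu, eta, rho, gam, frozen as coefficients of the linear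
   system in (a, b, c) = (eta, rho, theta). *)
lemma norm_decoupled_riccati_field_le:
  fixes m e r g a b c r\<^sub>\<alpha> r\<^sub>\<beta> M :: real
  assumes "r\<^sub>\<alpha> > 0" "r\<^sub>\<beta> > 0" "\<bar>m\<bar> \<le> M" "\<bar>e\<bar> \<le> M" "\<bar>r\<bar> \<le> M" "\<bar>g\<bar> \<le> M"
  shows "norm ((m / r\<^sub>\<alpha> + r / r\<^sub>\<beta>) * a - b, e / r\<^sub>\<alpha> * a + r / r\<^sub>\<beta> * b, g / r\<^sub>\<alpha> * a + r / r\<^sub>\<beta> * c)
    \<le> 6 * (M / r\<^sub>\<alpha> + M / r\<^sub>\<beta> + 1) * norm (a, b, c)"
proof -
  define K where "K = M / r\<^sub>\<alpha> + M / r\<^sub>\<beta> + 1"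
  define N where "N = norm (a, b, c)"
  have coeff_M: "\<bar>m / r\<^sub>\<alpha>\<bar> \<le> M / r\<^sub>\<alpha>" "\<bar>e / r\<^sub>\<alpha>\<bar> \<le> M / r\<^sub>\<alpha>" "\<bar>g / r\<^sub>\<alpha>\<bar> \<le> M / r\<^sub>\<alpha>"
      "\<bar>r / r\<^sub>\<beta>\<bar> \<le> M / r\<^sub>\<beta>"
    using assms by (simp_all add: divide_right_mono)
  moreover have "M / r\<^sub>\<alpha> \<ge> 0" "M / r\<^sub>\<beta> \<ge> 0"
    using assms by simp_all
  ultimately have coeff_K: "\<bar>m / r\<^sub>\<alpha> + r / r\<^sub>\<beta>\<bar> \<le> K" "\<bar>-1\<bar> \<le> K" "\<bar>e / r\<^sub>\<alpha>\<bar> \<le> K"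
      "\<bar>g / r\<^sub>\<alpha>\<bar> \<le> K" "\<bar>r / r\<^sub>\<beta>\<bar> \<le> K"
    unfolding K_def by linarith+
  have comp: "\<bar>a\<bar> \<le> N" "\<bar>b\<bar> \<le> N" "\<bar>c\<bar> \<le> N"
    unfolding N_def by (metis norm_fst_le norm_snd_le order_trans real_norm_def)+
  have "norm ((m / r\<^sub>\<alpha> + r / r\<^sub>\<beta>) * a - b, e / r\<^sub>\<alpha> * a + r / r\<^sub>\<beta> * b, g / r\<^sub>\<alpha> * a + r / r\<^sub>\<beta> * c)
      \<le> \<bar>(m / r\<^sub>\<alpha> + r / r\<^sub>\<beta>) * a + (-1) * b\<bar> + \<bar>e / r\<^sub>\<alpha> * a + r / r\<^sub>\<beta> * b\<bar>
        + \<bar>g / r\<^sub>\<alpha> * a + r / r\<^sub>\<beta> * c\<bar>"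
    using norm_triple_le by simp
  also have "\<dots> \<le> 2 * K * N + 2 * K * N + 2 * K * N"
    using coeff_K comp by (intro add_mono abs_linear_form_le) auto
  also have "\<dots> = 6 * K * N" by simp
  finally show ?thesis unfolding K_def N_def .
qed

theorem corollary1:
  fixes T r\<^sub>\<alpha> r\<^sub>\<beta> r\<^sub>v t\<^sub>v \<sigma>\<^sub>B \<sigma>\<^sub>W lam vT :: real
    and vbar fc fd mu eta rho gam theta xi :: "real \<Rightarrow> real"
  assumes "T > 0"
    and "r\<^sub>\<alpha> > 0" "r\<^sub>\<beta> > 0" "r\<^sub>v > 0" "t\<^sub>v > 0" "\<sigma>\<^sub>B > 0" "\<sigma>\<^sub>W > 0"
    and "continuous_on {0..T} vbar" "continuous_on {0..T} fc" "continuous_on {0..T} fd"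
    and "0 \<le> lam" "lam \<le> r\<^sub>\<beta> * \<sigma>\<^sub>W\<^sup>2"
    and "(\<forall>t\<in>{0..T}. fc t = 0 \<and> fd t = 0) \<or> lam = 0"
    and "is_riccati_solution T r\<^sub>\<alpha> r\<^sub>\<beta> r\<^sub>v t\<^sub>v \<sigma>\<^sub>B \<sigma>\<^sub>W lam vT vbar fc fd mu eta rho gam theta xi"
  shows "(\<forall>t\<in>{0..T}. eta t = 0 \<and> rho t = 0 \<and> theta t = 0)
       \<and> (\<forall>t\<in>{0..T}. \<forall>v y. beta_hat r\<^sub>\<beta> \<sigma>\<^sub>W lam fc fd eta rho theta t v y = 0)"
proof -
  note sol = assms(14)
  have decoupled: "lam = 0 \<or> fc t = 0 \<and> fd t = 0" if "t \<in> {0..T}" for t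
    using assms(13) that by auto
  obtain M where M: "\<And>t. t \<in> {0..T} \<Longrightarrow> \<bar>mu t\<bar> \<le> M \<and> \<bar>eta t\<bar> \<le> M \<and> \<bar>rho t\<bar> \<le> M \<and> \<bar>gam t\<bar> \<le> M"
    using riccati_solution_bounded[OF sol] by blast
  define x where "x t = (eta t, rho t, theta t)" for t
  define x' where "x' t = ((mu t / r\<^sub>\<alpha> + rho t / r\<^sub>\<beta>) * eta t - rho t,
    eta t / r\<^sub>\<alpha> * eta t + rho t / r\<^sub>\<beta> * rho t, gam t / r\<^sub>\<alpha> * eta t + rho t / r\<^sub>\<beta> * theta t)" for t
  have deriv: "(x has_vector_derivative x' t) (at t within {0..T})" if "t \<in> {0..T}" for t
    using riccati_solution_decoupled_derivatives[OF sol that decoupled[OF that]]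
    unfolding x_def x'_def has_real_derivative_iff_has_vector_derivative
    by (intro has_vector_derivative_Pair)
  have bound: "norm (x' t) \<le> 6 * (M / r\<^sub>\<alpha> + M / r\<^sub>\<beta> + 1) * norm (x t)" if "t \<in> {0..T}" for t
    unfolding x_def x'_def using M[OF that] assms(2,3) by (intro norm_decoupled_riccati_field_le) auto
  have terminal: "x T = 0"
    using sol[unfolded is_riccati_solution_def, THEN conjunct2] by (simp add: x_def prod_eq_iff)
  have vanish: "eta t = 0 \<and> rho t = 0 \<and> theta t = 0" if "t \<in> {0..T}" for t
    using linearly_bounded_derivative_vanishing_backward[OF deriv bound terminal that]
    by (simp add: x_def prod_eq_iff)
  moreover have "beta_hat r\<^sub>\<beta> \<sigma>\<^sub>W lam fc fd eta rho theta t v y = 0" if "t \<in> {0..T}" for t v y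
    using vanish[OF that] decoupled[OF that] by (auto simp: beta_hat_def)
  ultimately show ?thesis by blast
qed

end
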